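(* For all non-negative integers $n$ and $p$, $$\sum_{k=1}^n\frac{1}{2^{2k}}\binom{2(k+p)}{k+p}\binom{k+p}{k}\left(O_{k+p}-O_p\right)=\frac{1}{2^{2n+1}}\,\frac{p+1}{2p+1}\binom{2(n+p+1)}{n+p+1}\binom{n+p+1}{n}\left(O_{n+p+1}-O_{p+1}\right).$$ In particular, $\sum_{k=1}^n\frac{O_k}{2^{2k}}\binom{2k}{k}=\frac{n+1}{2^{2n+1}}\binom{2(n+1)}{n+1}(O_{n+1}-1)$.
   Context: The odd harmonic numbers are $O_n=\sum_{k=1}^n\frac{1}{2k-1}$, $O_0=0$. *)

theory Defs
  imports Complex_Main
begin

definition oddharm :: "nat \<Rightarrow> real" where
  "oddharm n = (\<Sum>k=1..n. 1 / (2 * real k - 1))"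

end

theory Submission
  imports Defs
begin

text \<open>Put \<open>m = n + p + 1\<close> and
  \<open>X = O\<^sub>m - O\<^sub>p\<^sub>+\<^sub>1\<close>. The binomial coefficients of the new summand and of the
  next closed form are rational multiples of \<open>binom(2m, m) binom(m, n)\<close>, and
  \<open>O\<^sub>p = O\<^sub>p\<^sub>+\<^sub>1 - 1/(2p+1)\<close>, \<open>O\<^sub>m\<^sub>+\<^sub>1 = O\<^sub>m + 1/(2m+1)\<close>. After dividing by the common
  factor the step becomes
  \<open>X/(2p+1) + (X + 1/(2p+1))/(2(n+1)) = ((2m+1)X + 1)/(2(n+1)(2p+1))\<close>,
  which holds because \<open>2m + 1 = (2p+1) + 2(n+1)\<close>.\<close>

lemma oddharm_Suc: "oddharm (Suc m) = oddharm m + 1 / (2 * real m + 1)"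
  unfolding oddharm_def by (simp add: algebra_simps)

lemma real_binomial_Suc_Suc:
  "real (Suc n choose Suc k) = (real n + 1) / (real k + 1) * real (n choose k)"
proof -
  have "real (Suc k) * real (Suc n choose Suc k) = real (Suc n) * real (n choose k)"
    by (metis Suc_times_binomial of_nat_mult)
  then show ?thesis by (simp add: field_simps)
qed

lemma real_binomial_Suc_add:
  "real (Suc (a + b) choose Suc a) = (real b + 1) / (real a + 1) * real (Suc (a + b) choose a)"
proof -
  have "real (Suc a) * real (Suc (a + b) choose Suc a) = real (Suc b) * real (Suc (a + b) choose a)"
    by (metis Suc_times_binomial_add of_nat_mult)
  then show ?thesis by (simp add: field_simps)
qed

lemma real_central_binomial_Suc:
  "real ((2 * Suc m) choose Suc m) = 2 * (2 * real m + 1) / (real m + 1) * real ((2 * m) choose m)"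
proof -
  have "real ((2 * Suc m) choose Suc m) = 2 * real (Suc (2 * m) choose m)"
  proof -
    have "(real (Suc (2 * m)) + 1) / (real m + 1) = 2"
      by (simp add: field_simps)
    then show ?thesis
      using real_binomial_Suc_Suc[of "Suc (2 * m)" m] by (simp del: binomial_Suc_Suc)
  qed
  also have "Suc (2 * m) choose m = Suc (2 * m) choose Suc m"
    using binomial_symmetric[of m "Suc (2 * m)"] by simp
  finally show ?thesis
    using real_binomial_Suc_Suc[of "2 * m" m] by (simp del: binomial_Suc_Suc)
qed

lemma oddharm_binomial_sum:
  "(\<Sum>k=1..n. 1 / 2 ^ (2*k) * real ((2*(k+p)) choose (k+p)) * real ((k+p) choose k)
      * (oddharm (k+p) - oddharm p))
   = 1 / 2 ^ (2*n+1) * (real (p+1) / real (2*p+1))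
      * real ((2*(n+p+1)) choose (n+p+1)) * real ((n+p+1) choose n)
      * (oddharm (n+p+1) - oddharm (p+1))"
proof (induction n)
  case 0
  show ?case by simp
next
  case (Suc n)
  define m where "m = Suc (n + p)"
  define b where "b = real ((2 * m) choose m)"
  define c where "c = real (m choose n)"
  define X where "X = oddharm m - oddharm (p + 1)"
  have c_Suc_right: "real (m choose Suc n) = (real p + 1) / (real n + 1) * c"
    unfolding m_def c_def by (rule real_binomial_Suc_add)
  have c_Suc_Suc: "real (Suc m choose Suc n) = (real m + 1) / (real n + 1) * c"
    unfolding c_def by (rule real_binomial_Suc_Suc)
  have b_Suc: "real ((2 * Suc m) choose Suc m) = 2 * (2 * real m + 1) / (real m + 1) * b"
    unfolding b_def by (rule real_central_binomial_Suc)
  have X_p: "oddharm m - oddharm p = X + 1 / (2 * real p + 1)"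
    unfolding X_def by (simp add: oddharm_Suc)
  have X_Suc_m: "oddharm (Suc m) - oddharm (p + 1) = X + 1 / (2 * real m + 1)"
    unfolding X_def by (simp add: oddharm_Suc)
  have "(\<Sum>k=1..Suc n. 1 / 2 ^ (2*k) * real ((2*(k+p)) choose (k+p)) * real ((k+p) choose k)
      * (oddharm (k+p) - oddharm p))
    = 1 / 2 ^ (2*n+1) * (real (p+1) / real (2*p+1)) * b * c * X
      + 1 / 2 ^ (2 * Suc n) * b * real (m choose Suc n) * (oddharm m - oddharm p)"
    using Suc.IH by (simp add: m_def b_def c_def X_def del: binomial_Suc_Suc)
  also have "\<dots> = 1 / 2 ^ (2 * Suc n + 1) * (real (p+1) / real (2*p+1))
      * real ((2 * Suc m) choose Suc m) * real (Suc m choose Suc n) * (oddharm (Suc m) - oddharm (p+1))"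
  proof -
    define s :: real where "s = 1 / 2 ^ (2*n+1)"
    have pow: "1 / (2::real) ^ (2*n+1) = s" "1 / (2::real) ^ (2 * Suc n) = s / 2"
      "1 / (2::real) ^ (2 * Suc n + 1) = s / 4"
      by (simp_all add: s_def power_add)
    have m: "real m = real n + real p + 1"
      by (simp add: m_def)
    show ?thesis
      unfolding c_Suc_right c_Suc_Suc b_Suc X_p X_Suc_m pow m
      by (simp add: divide_simps) (simp add: algebra_simps)
  qed
  finally show ?case by (simp add: m_def del: binomial_Suc_Suc)
qed

lemma oddharm_central_binomial_sum:
  "(\<Sum>k=1..n. oddharm k / 2 ^ (2*k) * real ((2*k) choose k))
   = real (n+1) / 2 ^ (2*n+1) * real ((2*(n+1)) choose (n+1)) * (oddharm (n+1) - 1)"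
proof -
  have oddharm_0: "oddharm 0 = 0" and oddharm_1: "oddharm (Suc 0) = 1"
    by (simp_all add: oddharm_def)
  have "(\<Sum>k=1..n. oddharm k / 2 ^ (2*k) * real ((2*k) choose k))
      = (\<Sum>k=1..n. 1 / 2 ^ (2*k) * real ((2*(k+0)) choose (k+0)) * real ((k+0) choose k)
          * (oddharm (k+0) - oddharm 0))"
    by (simp add: oddharm_0 ac_simps)
  also have "\<dots> = 1 / 2 ^ (2*n+1) * (real (0+1) / real (2*0+1))
      * real ((2*(n+0+1)) choose (n+0+1)) * real ((n+0+1) choose n)
      * (oddharm (n+0+1) - oddharm (0+1))"
    by (rule oddharm_binomial_sum)
  also have "\<dots> = real (n+1) / 2 ^ (2*n+1) * real ((2*(n+1)) choose (n+1)) * (oddharm (n+1) - 1)"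
    by (simp add: oddharm_1 del: binomial_Suc_Suc)
  finally show ?thesis .
qed

theorem theorem11:
  shows "(\<forall>n p :: nat.
     (\<Sum>k=1..n. 1 / 2 ^ (2*k) * real ((2*(k+p)) choose (k+p)) * real ((k+p) choose k)
        * (oddharm (k+p) - oddharm p))
     = 1 / 2 ^ (2*n+1) * (real (p+1) / real (2*p+1))
        * real ((2*(n+p+1)) choose (n+p+1)) * real ((n+p+1) choose n)
        * (oddharm (n+p+1) - oddharm (p+1)))
   \<and> (\<forall>n :: nat.
     (\<Sum>k=1..n. oddharm k / 2 ^ (2*k) * real ((2*k) choose k))
     = real (n+1) / 2 ^ (2*n+1) * real ((2*(n+1)) choose (n+1)) * (oddharm (n+1) - 1))"
  using oddharm_binomial_sum oddharm_central_binomial_sum by blast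

end
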